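(* Let $F$ be an $(\mathbb{F}_q,\mathbb{Z})$-field and $K\subseteq F$ a subfield which is an $(\mathbb{F}_{q'},\mathbb{Z})$-field. Let $A=\{(x,y,z)\in F^3:\mathrm{ord}\,z=\mathrm{ord}(y-x)\}$ and let $\Pi:A\to F^2$, $(x,y,z)\mapsto(x,y)$. Then there is no $\mathcal{L}_K$-definable function $f:\Pi(A)\to A$ with $\Pi\circ f=\mathrm{Id}_{\Pi(A)}$.
   Context: $\mathrm{ord}$ is the valuation of $F$, with $\mathrm{ord}\,0=+\infty$. $\mathcal{L}_K=\{\bar c\}_{c\in K}\cup\mathcal{L}_{\mathrm{dist}}'$, where $\bar c$ is the function $x\mapsto cx$ and $\mathcal{L}_{\mathrm{dist}}'=(\{D^{(4)}_j\}_{j\in\mathbb{Z}},\{R_{n,m}\}_{n,m>0})$ with $D^{(4)}_j(x,y,z,t)\Leftrightarrow\mathrm{ord}(x-y)<\mathrm{ord}(z-t)+j\cdot\mathrm{ord}\,\pi$ ($\pi$ of smallest positive order), $R_{n,m}(x,y,z)\Leftrightarrow y-x\in zQ_{n,m}$, where $Q_{n,m}=\{x\in P_n(1+\mathcal{M}_F^m):\mathrm{ac}_m(x)=1\}$, $P_n$ the nonzero $n$-th powers and $\mathrm{ac}_m:F^\times\to(\mathcal{O}_F/\pi^m)^\times$ the unique homomorphism with $\mathrm{ac}_m(\pi)=1$, $\mathrm{ac}_m(u)\equiv u\bmod\pi^m$ for units $u$. Definable = with parameters from $F$. *)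

theory Defs
  imports Complex_Main "HOL-Library.Extended_Real" "HOL-Computational_Algebra.Polynomial"
begin

text \<open>A valuation is a map ord into the extended reals, ord 0 = +infinity.
  All notions below are relative to a subset S (a subfield) of the ambient field,
  with the restriction of ord to S.\<close>

definition subfield :: "'a::field set \<Rightarrow> bool" where
  "subfield S \<longleftrightarrow> 0 \<in> S \<and> 1 \<in> S \<and> (\<forall>x\<in>S. \<forall>y\<in>S. x + y \<in> S \<and> x * y \<in> S)
     \<and> (\<forall>x\<in>S. - x \<in> S \<and> inverse x \<in> S)"

definition is_valuation_on :: "'a::field set \<Rightarrow> ('a \<Rightarrow> ereal) \<Rightarrow> bool" where
  "is_valuation_on S ord \<longleftrightarrow>
     (\<forall>x\<in>S. ord x = \<infinity> \<longleftrightarrow> x = 0) \<and>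
     (\<forall>x\<in>S. ord x \<noteq> - \<infinity>) \<and>
     (\<forall>x\<in>S. \<forall>y\<in>S. ord (x * y) = ord x + ord y) \<and>
     (\<forall>x\<in>S. \<forall>y\<in>S. min (ord x) (ord y) \<le> ord (x + y))"

definition valring :: "'a::field set \<Rightarrow> ('a \<Rightarrow> ereal) \<Rightarrow> 'a set" where
  "valring S ord = {x \<in> S. 0 \<le> ord x}"

definition value_group_Z :: "'a::field set \<Rightarrow> ('a \<Rightarrow> ereal) \<Rightarrow> bool" where
  "value_group_Z S ord \<longleftrightarrow>
     (\<exists>e::real. e > 0 \<and> ord ` (S - {0}) = range (\<lambda>k::int. ereal (e * of_int k)))"

text \<open>Residue field O_S / M_S has exactly q elements.\<close>
definition residue_card :: "'a::field set \<Rightarrow> ('a \<Rightarrow> ereal) \<Rightarrow> nat \<Rightarrow> bool" where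
  "residue_card S ord q \<longleftrightarrow>
     (\<exists>R. R \<subseteq> valring S ord \<and> finite R \<and> card R = q \<and>
        (\<forall>x\<in>valring S ord. \<exists>!r\<in>R. 0 < ord (x - r)))"

definition henselian_on :: "'a::field set \<Rightarrow> ('a \<Rightarrow> ereal) \<Rightarrow> bool" where
  "henselian_on S ord \<longleftrightarrow>
     (\<forall>p::'a poly. \<forall>a\<in>valring S ord.
        set (coeffs p) \<subseteq> valring S ord \<longrightarrow> 0 < ord (poly p a) \<longrightarrow>
        ord (poly (pderiv p) a) = 0 \<longrightarrow>
        (\<exists>b\<in>valring S ord. poly p b = 0 \<and> 0 < ord (b - a)))"

text \<open>(F_q,Z)-field: henselian valued field of characteristic 0 (characteristic 0 is
  imposed by the type class of the ambient field), value group Z, residue field F_q.\<close>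
definition FqZ_field :: "'a::field_char_0 set \<Rightarrow> ('a \<Rightarrow> ereal) \<Rightarrow> nat \<Rightarrow> bool" where
  "FqZ_field S ord q \<longleftrightarrow> subfield S \<and> is_valuation_on S ord \<and> value_group_Z S ord \<and>
     residue_card S ord q \<and> henselian_on S ord"

definition uniformizer :: "('a::field \<Rightarrow> ereal) \<Rightarrow> 'a \<Rightarrow> bool" where
  "uniformizer ord \<pi> \<longleftrightarrow> 0 < ord \<pi> \<and> (\<forall>x. 0 < ord x \<longrightarrow> ord \<pi> \<le> ord x)"

text \<open>ac_m(x) = 1: writing x = pi^k u with u a unit, u = 1 mod pi^m.\<close>
definition ac_one :: "('a::field \<Rightarrow> ereal) \<Rightarrow> 'a \<Rightarrow> nat \<Rightarrow> 'a \<Rightarrow> bool" where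
  "ac_one ord \<pi> m x \<longleftrightarrow>
     (\<exists>k::int. ord x = ereal (of_int k) * ord \<pi> \<and>
        ereal (of_nat m) * ord \<pi> \<le> ord (x * \<pi> powi (- k) - 1))"

definition Qset :: "('a::field \<Rightarrow> ereal) \<Rightarrow> 'a \<Rightarrow> nat \<Rightarrow> nat \<Rightarrow> 'a set" where
  "Qset ord \<pi> n m = {x. (\<exists>a u. a \<noteq> 0 \<and> ereal (of_nat m) * ord \<pi> \<le> ord (u - 1) \<and> x = a ^ n * u)
                        \<and> ac_one ord \<pi> m x}"

datatype 'a tm = Var nat | Scal 'a "'a tm"

datatype 'a fm =
    Eq "'a tm" "'a tm"
  | Dj int "'a tm" "'a tm" "'a tm" "'a tm"
  | Rnm nat nat "'a tm" "'a tm" "'a tm"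
  | Neg "'a fm"
  | Conj "'a fm" "'a fm"
  | Ex nat "'a fm"

primrec tm_scalars :: "'a tm \<Rightarrow> 'a set" where
  "tm_scalars (Var i) = {}"
| "tm_scalars (Scal c t) = insert c (tm_scalars t)"

primrec wf_LK :: "'a set \<Rightarrow> 'a fm \<Rightarrow> bool" where
  "wf_LK K (Eq s t) = (tm_scalars s \<union> tm_scalars t \<subseteq> K)"
| "wf_LK K (Dj j x y z t) = (tm_scalars x \<union> tm_scalars y \<union> tm_scalars z \<union> tm_scalars t \<subseteq> K)"
| "wf_LK K (Rnm n m x y z) = (0 < n \<and> 0 < m \<and> tm_scalars x \<union> tm_scalars y \<union> tm_scalars z \<subseteq> K)"
| "wf_LK K (Neg \<phi>) = wf_LK K \<phi>"
| "wf_LK K (Conj \<phi> \<psi>) = (wf_LK K \<phi> \<and> wf_LK K \<psi>)"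
| "wf_LK K (Ex i \<phi>) = wf_LK K \<phi>"

primrec eval_tm :: "(nat \<Rightarrow> 'a::field) \<Rightarrow> 'a tm \<Rightarrow> 'a" where
  "eval_tm \<sigma> (Var i) = \<sigma> i"
| "eval_tm \<sigma> (Scal c t) = c * eval_tm \<sigma> t"

primrec sat :: "('a::field \<Rightarrow> ereal) \<Rightarrow> 'a \<Rightarrow> (nat \<Rightarrow> 'a) \<Rightarrow> 'a fm \<Rightarrow> bool" where
  "sat ord \<pi> \<sigma> (Eq s t) = (eval_tm \<sigma> s = eval_tm \<sigma> t)"
| "sat ord \<pi> \<sigma> (Dj j x y z t) =
     (ord (eval_tm \<sigma> x - eval_tm \<sigma> y) < ord (eval_tm \<sigma> z - eval_tm \<sigma> t) + ereal (of_int j) * ord \<pi>)"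
| "sat ord \<pi> \<sigma> (Rnm n m x y z) =
     (eval_tm \<sigma> y - eval_tm \<sigma> x \<in> (\<lambda>w. eval_tm \<sigma> z * w) ` Qset ord \<pi> n m)"
| "sat ord \<pi> \<sigma> (Neg \<phi>) = (\<not> sat ord \<pi> \<sigma> \<phi>)"
| "sat ord \<pi> \<sigma> (Conj \<phi> \<psi>) = (sat ord \<pi> \<sigma> \<phi> \<and> sat ord \<pi> \<sigma> \<psi>)"
| "sat ord \<pi> \<sigma> (Ex i \<phi>) = (\<exists>a. sat ord \<pi> (\<sigma>(i := a)) \<phi>)"

text \<open>X \<subseteq> F^n (tuples as lists of length n) is L_K-definable with parameters from F:
  variables 0..n-1 are the tuple, the remaining variables are assigned parameters.\<close>
definition LK_definable :: "'a::field set \<Rightarrow> ('a \<Rightarrow> ereal) \<Rightarrow> 'a \<Rightarrow> nat \<Rightarrow> 'a list set \<Rightarrow> bool" where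
  "LK_definable K ord \<pi> n X \<longleftrightarrow> X \<subseteq> {xs. length xs = n} \<and>
     (\<exists>\<phi> (e :: nat \<Rightarrow> 'a). wf_LK K \<phi> \<and>
        (\<forall>xs. length xs = n \<longrightarrow> (xs \<in> X \<longleftrightarrow> sat ord \<pi> (\<lambda>i. if i < n then xs ! i else e i) \<phi>)))"

end

theory Submission
  imports Defs
begin

(* Suppose an L_K-formula defined such a section f. Put y_n = 1 + \<pi>^(n+1) and let z_n be the
   last coordinate of f(1, y_n); then ord z_n = (n+1) ord \<pi>, so the z_n have pairwise distinct
   orders. Work with sequences modulo a free ultrafilter on the indices and fix k above the
   precisions m of all relations R_{n,m} occurring in the formula. Call a sequence w twisted if
   some c in K^x puts w/c almost everywhere into the ball {x. ord (x - z) > ord z}; the twist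
   multiplies twisted sequences by u = 1 + \<pi>^k and fixes all others. It is surjective, commutes
   with multiplication by scalars from K, and changes every difference b - a by a factor congruent
   to 1 modulo \<pi>^k (when exactly one of a, b is twisted this is the ultrametric inequality: a lies
   outside the ball of b). Hence the twist preserves atomic formulas almost everywhere, and by
   induction on formulas (the ultrafilter handles negation, surjectivity the quantifiers) it
   preserves the defining formula. It fixes the constant-order sequences 1 and y_n but sends z_n
   to u z_n, so the formula also holds of (1, y_n, u z_n) for some n: f is not a function. *)

section \<open>Ultrafilters\<close>

definition ultrafilter :: "'a filter \<Rightarrow> bool" where
  "ultrafilter F \<longleftrightarrow> F \<noteq> bot \<and> (\<forall>P. eventually P F \<or> eventually (\<lambda>x. \<not> P x) F)"

lemma ultrafilter_eventually_not:
  "ultrafilter F \<Longrightarrow> eventually (\<lambda>x. \<not> P x) F \<longleftrightarrow> \<not> eventually P F"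
  unfolding ultrafilter_def using eventually_frequently frequently_def by blast

lemma Inf_chain_ne_bot:
  fixes C :: "'a filter set"
  assumes "C \<noteq> {}" "bot \<notin> C" "\<And>F G. F \<in> C \<Longrightarrow> G \<in> C \<Longrightarrow> F \<le> G \<or> G \<le> F"
  shows "Inf C \<noteq> bot"
proof -
  have "\<not> eventually (\<lambda>x. False) (Inf C)"
  proof
    assume "eventually (\<lambda>x. False) (Inf C)"
    moreover have "\<exists>H\<in>C. H \<le> inf F G" if "F \<in> C" "G \<in> C" for F G
      using assms(3)[OF that] that by (metis inf.absorb1 inf.absorb2 order_refl)
    ultimately obtain H where "H \<in> C" "eventually (\<lambda>x. False) H"
      using eventually_Inf_base[OF assms(1)] by blast
    then show False using assms(2) by (simp add: eventually_False)
  qed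
  then show ?thesis by (simp add: eventually_False)
qed

lemma ex_finest_proper_filter_le:
  fixes F0 :: "'a filter"
  assumes "F0 \<noteq> bot"
  shows "\<exists>M\<in>{F. F \<noteq> bot \<and> F \<le> F0}. \<forall>F\<in>{F. F \<noteq> bot \<and> F \<le> F0}. F \<le> M \<longrightarrow> F = M"
proof (rule predicate_Zorn)
  show "partial_order_on {F. F \<noteq> bot \<and> F \<le> F0} (relation_of (\<lambda>F G. G \<le> F) {F. F \<noteq> bot \<and> F \<le> F0})"
    by (rule partial_order_on_relation_ofI) auto
next
  fix C assume C: "C \<in> Chains (relation_of (\<lambda>F G. G \<le> F) {F. F \<noteq> bot \<and> F \<le> F0})"
  then have sub: "C \<subseteq> {F. F \<noteq> bot \<and> F \<le> F0}" and tot: "\<And>F G. F \<in> C \<Longrightarrow> G \<in> C \<Longrightarrow> F \<le> G \<or> G \<le> F"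
    by (auto simp: Chains_def relation_of_def)
  show "\<exists>G\<in>{F. F \<noteq> bot \<and> F \<le> F0}. \<forall>F\<in>C. G \<le> F"
  proof (cases "C = {}")
    case True then show ?thesis using assms by auto
  next
    case False
    have "bot \<notin> C" using sub by auto
    then have "Inf C \<noteq> bot" by (rule Inf_chain_ne_bot[OF False _ tot])
    moreover have "Inf C \<le> F0" using False sub by (auto intro: Inf_lower2)
    ultimately show ?thesis by (auto intro: Inf_lower)
  qed
qed

lemma ultrafilter_le_exists:
  fixes F0 :: "'a filter"
  assumes "F0 \<noteq> bot"
  shows "\<exists>F. ultrafilter F \<and> F \<le> F0"
proof -
  obtain M where "M \<in> {F. F \<noteq> bot \<and> F \<le> F0}"
    and max0: "\<forall>F\<in>{F. F \<noteq> bot \<and> F \<le> F0}. F \<le> M \<longrightarrow> F = M"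
    using ex_finest_proper_filter_le[OF assms] by (rule bexE)
  then have M: "M \<noteq> bot" "M \<le> F0" by simp_all
  have max: "F = M" if "F \<noteq> bot" "F \<le> M" for F
    using max0 that M(2) by auto
  have "eventually P M" if "\<not> eventually (\<lambda>x. \<not> P x) M" for P
  proof -
    let ?G = "inf M (principal {x. P x})"
    have "\<not> eventually (\<lambda>x. False) ?G"
      using that by (simp add: eventually_inf_principal)
    then have "?G = M" using max[of ?G] by (simp add: eventually_False)
    moreover have "eventually P ?G"
      by (simp add: eventually_inf_principal)
    ultimately show ?thesis by simp
  qed
  then have "ultrafilter M" using M(1) unfolding ultrafilter_def by blast
  then show ?thesis using M(2) by blast
qed

section \<open>Valuations, principal units and the sets Q_{n,m}\<close>

locale valuation =
  fixes ord :: "'a::field \<Rightarrow> ereal"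
  assumes is_valuation: "is_valuation_on UNIV ord"
begin

lemma ord_eq_infinity_iff [simp]: "ord x = \<infinity> \<longleftrightarrow> x = 0"
  using is_valuation unfolding is_valuation_on_def by blast

lemma ord_neq_minf [simp]: "ord x \<noteq> - \<infinity>"
  using is_valuation unfolding is_valuation_on_def by blast

lemma ord_zero [simp]: "ord 0 = \<infinity>"
  by simp

lemma ord_mult: "ord (x * y) = ord x + ord y"
  using is_valuation unfolding is_valuation_on_def by blast

lemma ord_add: "min (ord x) (ord y) \<le> ord (x + y)"
  using is_valuation unfolding is_valuation_on_def by blast

lemma ord_real: obtains r where "x \<noteq> 0 \<Longrightarrow> ord x = ereal r"
  by (cases "ord x") auto

lemma ord_one [simp]: "ord 1 = 0"
proof -
  obtain r where "ord 1 = ereal r" using ord_real[of 1] by auto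
  then show ?thesis using ord_mult[of 1 1] by simp
qed

lemma ord_minus [simp]: "ord (- x) = ord x"
proof -
  obtain r where r: "ord (-1) = ereal r" using ord_real[of "-1"] by auto
  then have "r + r = 0" using ord_mult[of "-1" "-1"] by simp
  then show ?thesis using ord_mult[of "-1" x] r by simp
qed

lemma ord_minus_commute: "ord (x - y) = ord (y - x)"
  by (metis minus_diff_eq ord_minus)

lemma ord_divide: "y \<noteq> 0 \<Longrightarrow> ord (x / y) = ord x - ord y"
proof -
  assume y: "y \<noteq> 0"
  obtain r where r: "ord y = ereal r" using ord_real[of y] y by auto
  have "ord x = ord (x / y) + ord y" using ord_mult[of "x / y" y] y by simp
  then show ?thesis using r by (cases "ord (x / y)") simp_all
qed

lemma ord_power: "ord (x ^ k) = ereal (of_nat k) * ord x"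
proof (induction k)
  case (Suc k)
  then show ?case
    by (cases "ord x") (auto simp: ord_mult algebra_simps ereal_mult_infty)
qed simp

lemma ord_add_eq_left: "ord x < ord y \<Longrightarrow> ord (x + y) = ord x"
  using ord_add[of x y] ord_add[of "x + y" "- y"] by (auto simp: min_def split: if_splits)

lemma ord_eq_if_ord_diff_greater: "ord x < ord (y - x) \<Longrightarrow> ord y = ord x"
  using ord_add_eq_left[of x "y - x"] by simp

lemma ord_diff_greater_trans:
  "ord z < ord (x - z) \<Longrightarrow> ord z < ord (y - x) \<Longrightarrow> ord z < ord (y - z)"
  using ord_add[of "x - z" "y - x"] by (auto simp: min_def split: if_splits)

end

locale uniformized_valuation = valuation ord for ord :: "'a::field \<Rightarrow> ereal" +
  fixes \<pi> :: 'a
  assumes ord_pi_pos: "0 < ord \<pi>" and ord_pi_finite: "ord \<pi> \<noteq> \<infinity>"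
begin

lemma pi_power_nonzero: "\<pi> ^ k \<noteq> 0"
  using ord_pi_finite by auto

lemma ord_pi_power_pos: "0 < k \<Longrightarrow> 0 < ord (\<pi> ^ k)"
  using ord_pi_pos ord_pi_finite by (cases "ord \<pi>") (auto simp: ord_power)

lemma ord_pi_power_mono: "m \<le> k \<Longrightarrow> ord (\<pi> ^ m) \<le> ord (\<pi> ^ k)"
  using ord_pi_pos ord_pi_finite by (cases "ord \<pi>") (auto simp: ord_power mult_right_mono)

definition principal_unit :: "nat \<Rightarrow> 'a \<Rightarrow> bool" where
  "principal_unit m v \<longleftrightarrow> ord (\<pi> ^ m) \<le> ord (v - 1)"

definition rel_close :: "nat \<Rightarrow> 'a \<Rightarrow> 'a \<Rightarrow> bool" where
  "rel_close k x y \<longleftrightarrow> ord (\<pi> ^ k * y) \<le> ord (x - y)"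

lemma principal_unit_ord_nonneg: "principal_unit m v \<Longrightarrow> 0 \<le> ord v"
proof -
  assume "principal_unit m v"
  then have "0 \<le> ord (v - 1)"
    using ord_pi_power_mono[of 0 m] unfolding principal_unit_def by simp
  then show ?thesis using ord_add[of "v - 1" 1] by (simp add: min_def split: if_splits)
qed

lemma principal_unit_ord: "0 < m \<Longrightarrow> principal_unit m v \<Longrightarrow> ord v = 0"
  using ord_eq_if_ord_diff_greater[of 1 v] ord_pi_power_pos[of m]
  unfolding principal_unit_def by simp

lemma principal_unit_mono: "m \<le> k \<Longrightarrow> principal_unit k v \<Longrightarrow> principal_unit m v"
  unfolding principal_unit_def using ord_pi_power_mono by (meson order_trans)

lemma principal_unit_mult:
  assumes x: "principal_unit m x" and v: "principal_unit m v"
  shows "principal_unit m (x * v)"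
proof -
  have "ord (\<pi> ^ m) \<le> ord (x * (v - 1))"
    using v principal_unit_ord_nonneg[OF x] add_mono[of 0 "ord x" "ord (\<pi> ^ m)" "ord (v - 1)"]
    unfolding principal_unit_def by (simp add: ord_mult)
  then have "ord (\<pi> ^ m) \<le> min (ord (x * (v - 1))) (ord (x - 1))"
    using x unfolding principal_unit_def by simp
  also have "\<dots> \<le> ord (x * (v - 1) + (x - 1))" by (rule ord_add)
  finally show ?thesis unfolding principal_unit_def by (simp add: algebra_simps)
qed

lemma principal_unit_inverse:
  assumes "0 < m" and v: "principal_unit m v" shows "principal_unit m (inverse v)"
proof -
  have "v \<noteq> 0" using principal_unit_ord[OF assms] by auto
  then have "ord (inverse v - 1) = ord (v - 1) - ord v"
    using ord_divide[of v "1 - v"] ord_minus_commute[of 1 v] by (simp add: field_simps)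
  then show ?thesis using v principal_unit_ord[OF assms] unfolding principal_unit_def by simp
qed

lemma rel_close_iff_principal_unit:
  assumes "y \<noteq> 0" shows "rel_close k x y \<longleftrightarrow> principal_unit k (x / y)"
proof -
  obtain r where r: "ord y = ereal r" using ord_real[of y] assms by auto
  have "ord (x / y - 1) = ord (x - y) - ord y"
    using ord_divide[OF assms, of "x - y"] assms by (simp add: diff_divide_distrib)
  moreover obtain p where "ord (\<pi> ^ k) = ereal p" using ord_real pi_power_nonzero by metis
  ultimately show ?thesis unfolding rel_close_def principal_unit_def ord_mult r
    by (cases "ord (x - y)") auto
qed

lemma ord_less_ord_pi_power_mult:
  assumes "0 < k" "x \<noteq> 0" shows "ord x < ord (\<pi> ^ k * x)"
proof -
  obtain r p where "ord x = ereal r" "ord (\<pi> ^ k) = ereal p"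
    using ord_real[of x] ord_real[of "\<pi> ^ k"] pi_power_nonzero assms(2) by metis
  then show ?thesis using ord_pi_power_pos[OF assms(1)] by (simp add: ord_mult)
qed

lemma rel_close_ord_diff_greater: "0 < k \<Longrightarrow> y \<noteq> 0 \<Longrightarrow> rel_close k x y \<Longrightarrow> ord y < ord (x - y)"
  unfolding rel_close_def using ord_less_ord_pi_power_mult by (blast intro: less_le_trans)

lemma rel_close_ord_eq:
  assumes "0 < k" and xy: "rel_close k x y" shows "ord x = ord y"
proof (cases "y = 0")
  case True then show ?thesis using xy unfolding rel_close_def by simp
next
  case False
  then show ?thesis
    using rel_close_ord_diff_greater[OF assms(1) False xy] ord_eq_if_ord_diff_greater by blast
qed

lemma rel_close_refl: "rel_close k x x"
  unfolding rel_close_def by simp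

lemma rel_close_principal_unit_mult: "principal_unit k v \<Longrightarrow> rel_close k (v * x) x"
  using rel_close_iff_principal_unit[of x k "v * x"]
  by (cases "x = 0") (simp_all add: rel_close_refl)

lemma rel_close_eq_0_iff: "0 < k \<Longrightarrow> rel_close k x y \<Longrightarrow> x = 0 \<longleftrightarrow> y = 0"
  using rel_close_ord_eq ord_eq_infinity_iff by metis

lemma rel_close_minus: "rel_close k (- x) (- y) \<longleftrightarrow> rel_close k x y"
  unfolding rel_close_def by (metis minus_diff_minus mult_minus_right ord_minus)

lemma rel_close_sym: "0 < k \<Longrightarrow> rel_close k x y \<Longrightarrow> rel_close k y x"
  using rel_close_ord_eq[of k x y] ord_mult[of "\<pi> ^ k"] ord_minus_commute[of x y]
  unfolding rel_close_def by simp

lemma Qset_mult_principal_unit: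
  assumes "0 < m" and v: "principal_unit m v" and w: "w \<in> Qset ord \<pi> n m"
  shows "w * v \<in> Qset ord \<pi> n m"
proof -
  have pu: "principal_unit m x \<longleftrightarrow> ereal (of_nat m) * ord \<pi> \<le> ord (x - 1)" for x
    unfolding principal_unit_def ord_power ..
  obtain a t where a: "a \<noteq> 0" "principal_unit m t" "w = a ^ n * t"
    using w unfolding Qset_def pu by blast
  obtain j :: int where j: "ord w = ereal (of_int j) * ord \<pi>" "principal_unit m (w * \<pi> powi (- j))"
    using w unfolding Qset_def ac_one_def pu by blast
  have "principal_unit m (t * v)" "w * v = a ^ n * (t * v)"
    using principal_unit_mult[OF a(2) v] a(3) by simp_all
  moreover have "ord (w * v) = ereal (of_int j) * ord \<pi>"
    using j(1) principal_unit_ord[OF assms(1,2)] by (simp add: ord_mult)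
  moreover have "principal_unit m (w * v * \<pi> powi (- j))"
    using principal_unit_mult[OF j(2) v] by (simp add: ac_simps)
  ultimately show ?thesis
    using a(1) unfolding Qset_def ac_one_def pu by blast
qed

lemma Qset_mult_principal_unit_iff:
  assumes "0 < m" and v: "principal_unit m v"
  shows "w * v \<in> Qset ord \<pi> n m \<longleftrightarrow> w \<in> Qset ord \<pi> n m"
proof
  assume "w * v \<in> Qset ord \<pi> n m"
  then have "w * v * inverse v \<in> Qset ord \<pi> n m"
    using Qset_mult_principal_unit[OF assms(1) principal_unit_inverse[OF assms]] by blast
  moreover have "v \<noteq> 0" using principal_unit_ord[OF assms] by auto
  ultimately show "w \<in> Qset ord \<pi> n m" by (simp add: mult.assoc)
qed (rule Qset_mult_principal_unit[OF assms])

lemma zero_notin_Qset: "0 \<notin> Qset ord \<pi> n m"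
  using ord_pi_finite unfolding Qset_def ac_one_def by (cases "ord \<pi>") auto

lemma mem_scaled_Qset_iff:
  "c \<noteq> 0 \<Longrightarrow> b \<in> (\<lambda>w. c * w) ` Qset ord \<pi> n m \<longleftrightarrow> b / c \<in> Qset ord \<pi> n m"
  by (auto intro: image_eqI[of _ _ "b / c"])

lemma rel_close_mem_scaled_Qset_iff:
  assumes "0 < m" "m \<le> k" and b: "rel_close k b' b" and c: "rel_close k c' c"
  shows "b' \<in> (\<lambda>w. c' * w) ` Qset ord \<pi> n m \<longleftrightarrow> b \<in> (\<lambda>w. c * w) ` Qset ord \<pi> n m"
proof -
  have k: "0 < k" using assms(1,2) by simp
  consider "c = 0" | "c \<noteq> 0" "b = 0" | "c \<noteq> 0" "b \<noteq> 0" by blast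
  then show ?thesis
  proof cases
    case 1
    then show ?thesis using rel_close_eq_0_iff[OF k b] rel_close_eq_0_iff[OF k c] by auto
  next
    case 2
    then show ?thesis using rel_close_eq_0_iff[OF k b] rel_close_eq_0_iff[OF k c]
      by (simp add: mem_scaled_Qset_iff zero_notin_Qset)
  next
    case 3
    have "principal_unit k (b' / b)" "principal_unit k (c' / c)"
      using rel_close_iff_principal_unit 3 b c by blast+
    then have "principal_unit m ((b' / b) * inverse (c' / c))"
      using principal_unit_mult principal_unit_inverse[OF k] principal_unit_mono[OF assms(2)]
      by presburger
    then have "b / c * ((b' / b) * inverse (c' / c)) \<in> Qset ord \<pi> n m \<longleftrightarrow> b / c \<in> Qset ord \<pi> n m"
      by (rule Qset_mult_principal_unit_iff[OF assms(1)])
    moreover have "c' \<noteq> 0" using rel_close_eq_0_iff[OF k c] 3 by simp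
    moreover have "b / c * ((b' / b) * inverse (c' / c)) = b' / c'"
      using 3 by (simp add: field_simps)
    ultimately show ?thesis using 3 by (simp add: mem_scaled_Qset_iff)
  qed
qed

lemma rel_close_mult_iff:
  assumes "c \<noteq> 0" shows "rel_close k (c * x) (c * y) \<longleftrightarrow> rel_close k x y"
proof -
  obtain r where r: "ord c = ereal r" using ord_real[of c] assms by auto
  have "ord (\<pi> ^ k * (c * y)) = ord c + ord (\<pi> ^ k * y)" "ord (c * x - c * y) = ord c + ord (x - y)"
    by (simp_all add: ord_mult right_diff_distrib[symmetric] ac_simps del: right_diff_distrib)
  then show ?thesis unfolding rel_close_def r by (simp add: ereal_add_le_add_iff)
qed

lemma rel_close_twist_diff_ball:
  assumes b: "ord z < ord (b - z)" and a: "\<not> ord z < ord (a - z)"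
  shows "rel_close k ((1 + \<pi> ^ k) * b - a) (b - a)"
proof -
  have "ord (b - a) \<le> ord b"
  proof (rule ccontr)
    assume "\<not> ord (b - a) \<le> ord b"
    then have "ord z < ord (a - b)"
      using ord_eq_if_ord_diff_greater[OF b] ord_minus_commute[of a b] by simp
    then show False using ord_diff_greater_trans[OF b] a by blast
  qed
  then have "ord (\<pi> ^ k * (b - a)) \<le> ord (\<pi> ^ k * b)"
    by (simp add: ord_mult add_left_mono)
  then show ?thesis unfolding rel_close_def by (simp add: algebra_simps)
qed

end

section \<open>Twisting sequences along an ultrafilter\<close>

primrec max_Qset_level :: "'a fm \<Rightarrow> nat" where
  "max_Qset_level (Eq s t) = 0"
| "max_Qset_level (Dj j x y z t) = 0"
| "max_Qset_level (Rnm n m x y z) = m"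
| "max_Qset_level (Neg \<phi>) = max_Qset_level \<phi>"
| "max_Qset_level (Conj \<phi> \<psi>) = max (max_Qset_level \<phi>) (max_Qset_level \<psi>)"
| "max_Qset_level (Ex i \<phi>) = max_Qset_level \<phi>"

locale twist_setting = uniformized_valuation ord \<pi> for ord :: "'a::field \<Rightarrow> ereal" and \<pi> +
  fixes K :: "'a set" and F :: "nat filter" and z :: "nat \<Rightarrow> 'a" and k :: nat
  assumes subfield_K: "subfield K" and ultra: "ultrafilter F" and free: "F \<le> cofinite"
    and k_pos: "0 < k" and z_nonzero: "z n \<noteq> 0" and ord_z_inj: "inj (\<lambda>n. ord (z n))"
begin

definition twisted :: "(nat \<Rightarrow> 'a) \<Rightarrow> bool" where
  "twisted w \<longleftrightarrow> (\<exists>c\<in>K. c \<noteq> 0 \<and> (\<forall>\<^sub>F n in F. ord (z n) < ord (w n / c - z n)))"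

definition twist :: "(nat \<Rightarrow> 'a) \<Rightarrow> nat \<Rightarrow> 'a" where
  "twist w = (if twisted w then (\<lambda>n. (1 + \<pi> ^ k) * w n) else w)"

lemma F_nonbot: "F \<noteq> bot"
  using ultra unfolding ultrafilter_def by blast

lemma twisted_z: "twisted z"
proof -
  have "1 \<in> K" using subfield_K unfolding subfield_def by blast
  moreover have "ord (z n) < ord (z n / 1 - z n)" for n
    using z_nonzero[of n] by (cases "ord (z n)") auto
  ultimately show ?thesis
    unfolding twisted_def by (intro bexI[of _ 1]) (auto intro: always_eventually)
qed

lemma eventually_ord_z_neq: "\<forall>\<^sub>F n in F. ord (z n) \<noteq> C"
proof -
  have "finite {n. ord (z n) = C}"
    using finite_vimageI[OF _ ord_z_inj, of "{C}"] by (simp add: vimage_def)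
  then have "\<forall>\<^sub>F n in cofinite. ord (z n) \<noteq> C" by (simp add: eventually_cofinite)
  then show ?thesis by (rule filter_leD[OF free])
qed

lemma not_twisted_if_ord_const:
  assumes "\<And>n. ord (w n) = C" shows "\<not> twisted w"
proof
  assume "twisted w"
  then obtain c where "c \<noteq> 0" and close: "\<forall>\<^sub>F n in F. ord (z n) < ord (w n / c - z n)"
    unfolding twisted_def by blast
  have "\<forall>\<^sub>F n in F. ord (z n) = C - ord c"
    using close by (rule eventually_mono)
      (metis ord_eq_if_ord_diff_greater ord_divide assms \<open>c \<noteq> 0\<close>)
  then have "\<forall>\<^sub>F n in F. False"
    using eventually_ord_z_neq[of "C - ord c"] by eventually_elim simp
  then show False using F_nonbot by simp
qed

lemma twisted_mult_iff:
  assumes c: "c \<in> K" "c \<noteq> 0" shows "twisted (\<lambda>n. c * w n) \<longleftrightarrow> twisted w"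
proof
  assume "twisted (\<lambda>n. c * w n)"
  then obtain d where "d \<in> K" "d \<noteq> 0" "\<forall>\<^sub>F n in F. ord (z n) < ord (c * w n / d - z n)"
    unfolding twisted_def by blast
  moreover have "d / c \<in> K" using \<open>d \<in> K\<close> c subfield_K unfolding subfield_def
    by (simp add: divide_inverse)
  moreover have "c * x / d = x / (d / c)" for x using c by simp
  ultimately show "twisted w" unfolding twisted_def using c by (intro bexI[of _ "d / c"]) auto
next
  assume "twisted w"
  then obtain d where "d \<in> K" "d \<noteq> 0" "\<forall>\<^sub>F n in F. ord (z n) < ord (w n / d - z n)"
    unfolding twisted_def by blast
  moreover have "d * c \<in> K" using \<open>d \<in> K\<close> c subfield_K unfolding subfield_def by simp
  moreover have "c * x / (d * c) = x / d" for x using c by simp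
  ultimately show "twisted (\<lambda>n. c * w n)" unfolding twisted_def using c
    by (intro bexI[of _ "d * c"]) auto
qed

lemma twist_mult: "c \<in> K \<Longrightarrow> twist (\<lambda>n. c * w n) = (\<lambda>n. c * twist w n)"
  using not_twisted_if_ord_const[of "\<lambda>n. 0" \<infinity>]
  by (cases "c = 0") (auto simp: twist_def twisted_mult_iff mult.left_commute)

lemma twisted_rel_close_iff:
  assumes "\<And>n. rel_close k (w' n) (w n)" shows "twisted w' \<longleftrightarrow> twisted w"
proof -
  have *: "twisted v" if tw: "twisted v'" and close: "\<And>n. rel_close k (v n) (v' n)" for v v'
  proof -
    obtain c where c: "c \<in> K" "c \<noteq> 0" and near: "\<forall>\<^sub>F n in F. ord (z n) < ord (v' n / c - z n)"
      using tw unfolding twisted_def by blast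
    have "ord (z n) < ord (v n / c - z n)" if ball: "ord (z n) < ord (v' n / c - z n)" for n
    proof -
      have eq: "ord (v' n / c) = ord (z n)" using ord_eq_if_ord_diff_greater[OF ball] .
      then have "v' n / c \<noteq> 0" using z_nonzero[of n] ord_eq_infinity_iff by metis
      moreover have "rel_close k (v n / c) (v' n / c)"
        using close[of n] rel_close_mult_iff[of "inverse c"] c(2) by (simp add: field_simps)
      ultimately have "ord (z n) < ord (v n / c - v' n / c)"
        using rel_close_ord_diff_greater[OF k_pos] eq by metis
      then show ?thesis using ord_diff_greater_trans[OF ball] by blast
    qed
    then show ?thesis using c near unfolding twisted_def by (blast intro: eventually_mono)
  qed
  show ?thesis using *[of w' w] *[of w w'] assms rel_close_sym[OF k_pos] by blast
qed

lemma principal_unit_twist_factor: "principal_unit k (1 + \<pi> ^ k)"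
  unfolding principal_unit_def by simp

lemma twist_surj: "\<exists>w. twist w = w'"
proof (cases "twisted w'")
  case True
  let ?w = "\<lambda>n. inverse (1 + \<pi> ^ k) * w' n"
  have "principal_unit k (inverse (1 + \<pi> ^ k))"
    using principal_unit_inverse[OF k_pos principal_unit_twist_factor] .
  then have "twisted ?w"
    using True twisted_rel_close_iff[of ?w w'] rel_close_principal_unit_mult by blast
  moreover have "1 + \<pi> ^ k \<noteq> 0"
    using principal_unit_ord[OF k_pos principal_unit_twist_factor] by auto
  ultimately have "twist ?w = w'" unfolding twist_def by (simp add: fun_eq_iff)
  then show ?thesis by blast
qed (auto simp: twist_def)

lemma ex_twist_iff: "(\<exists>w. P w) \<longleftrightarrow> (\<exists>w. P (twist w))"
proof
  assume "\<exists>w. P w"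
  then obtain w where "P w" ..
  moreover obtain w' where "twist w' = w" using twist_surj by blast
  ultimately show "\<exists>w. P (twist w)" by blast
qed blast

lemma eventually_rel_close_twist_diff_mixed:
  assumes b: "twisted b" and a: "\<not> twisted a"
  shows "\<forall>\<^sub>F n in F. rel_close k (twist b n - twist a n) (b n - a n)"
proof -
  obtain c where c: "c \<in> K" "c \<noteq> 0" and near: "\<forall>\<^sub>F n in F. ord (z n) < ord (b n / c - z n)"
    using b unfolding twisted_def by blast
  have "\<not> (\<forall>\<^sub>F n in F. ord (z n) < ord (a n / c - z n))" using a c unfolding twisted_def by blast
  then have far: "\<forall>\<^sub>F n in F. \<not> ord (z n) < ord (a n / c - z n)"
    using ultrafilter_eventually_not[OF ultra] by blast
  show ?thesis using near far
  proof eventually_elim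
    case (elim n)
    then have "rel_close k (c * ((1 + \<pi> ^ k) * (b n / c) - a n / c)) (c * (b n / c - a n / c))"
      using rel_close_twist_diff_ball rel_close_mult_iff[OF c(2)] by blast
    then show ?case using a b c(2) unfolding twist_def by (simp add: algebra_simps)
  qed
qed

lemma eventually_rel_close_twist_diff:
  "\<forall>\<^sub>F n in F. rel_close k (twist b n - twist a n) (b n - a n)"
proof -
  consider "twisted b = twisted a" | "twisted b" "\<not> twisted a" | "\<not> twisted b" "twisted a"
    by blast
  then show ?thesis
  proof cases
    case 1
    then show ?thesis
      using rel_close_principal_unit_mult[OF principal_unit_twist_factor] rel_close_refl
      by (auto simp: twist_def right_diff_distrib[symmetric] simp del: right_diff_distrib)
  next
    case 2
    then show ?thesis by (rule eventually_rel_close_twist_diff_mixed)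
  next
    case 3
    have "rel_close k (x - y) (x' - y') \<longleftrightarrow> rel_close k (y - x) (y' - x')" for x y x' y'
      using rel_close_minus[of k "x - y" "x' - y'"] by simp
    then show ?thesis using eventually_rel_close_twist_diff_mixed[OF 3(2,1)] by simp
  qed
qed

lemma twist_zero: "twist (\<lambda>n. 0) = (\<lambda>n. 0)"
  using twist_mult[of 0] subfield_K unfolding subfield_def by simp

lemma eventually_twist_eq_iff: "\<forall>\<^sub>F n in F. twist b n = twist a n \<longleftrightarrow> b n = a n"
  using eventually_rel_close_twist_diff[of b a]
  by eventually_elim (use rel_close_eq_0_iff[OF k_pos] in force)

lemma eventually_ord_twist_diff: "\<forall>\<^sub>F n in F. ord (twist b n - twist a n) = ord (b n - a n)"
  using eventually_rel_close_twist_diff[of b a] by eventually_elim (rule rel_close_ord_eq[OF k_pos])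

lemma eventually_twist_mem_scaled_Qset_iff:
  assumes "0 < m" "m \<le> k"
  shows "\<forall>\<^sub>F n in F. twist b n - twist a n \<in> (\<lambda>w. twist c n * w) ` Qset ord \<pi> l m
                   \<longleftrightarrow> b n - a n \<in> (\<lambda>w. c n * w) ` Qset ord \<pi> l m"
  using eventually_rel_close_twist_diff[of b a] eventually_rel_close_twist_diff[of c "\<lambda>n. 0"]
  by eventually_elim (use rel_close_mem_scaled_Qset_iff[OF assms] twist_zero in auto)

definition twist_assignment :: "(nat \<Rightarrow> nat \<Rightarrow> 'a) \<Rightarrow> nat \<Rightarrow> nat \<Rightarrow> 'a" where
  "twist_assignment \<rho> n i = twist (\<lambda>m. \<rho> m i) n"

lemma eval_tm_twist_assignment:
  "tm_scalars t \<subseteq> K \<Longrightarrow> eval_tm (twist_assignment \<rho> n) t = twist (\<lambda>m. eval_tm (\<rho> m) t) n"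
  by (induction t) (auto simp: twist_assignment_def twist_mult)

lemma twist_assignment_upd:
  "twist_assignment (\<lambda>n. (\<rho> n)(i := a n)) n = (twist_assignment \<rho> n)(i := twist a n)"
  unfolding twist_assignment_def by (auto simp: fun_eq_iff)

theorem eventually_sat_twist_iff:
  assumes "wf_LK K \<phi>" "max_Qset_level \<phi> \<le> k"
  shows "(\<forall>\<^sub>F n in F. sat ord \<pi> (twist_assignment \<rho> n) \<phi>) \<longleftrightarrow>
    (\<forall>\<^sub>F n in F. sat ord \<pi> (\<rho> n) \<phi>)"
  using assms
proof (induction \<phi> arbitrary: \<rho>)
  case (Eq s t)
  let ?ev = "\<lambda>u m. eval_tm (\<rho> m) u"
  show ?case
    using Eq eventually_subst[OF eventually_twist_eq_iff[of "?ev s" "?ev t"]]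
    by (simp add: eval_tm_twist_assignment)
next
  case (Dj j x y s t)
  let ?ev = "\<lambda>u m. eval_tm (\<rho> m) u"
  have "\<forall>\<^sub>F n in F. ord (twist (?ev x) n - twist (?ev y) n) = ord (?ev x n - ?ev y n) \<and>
      ord (twist (?ev s) n - twist (?ev t) n) = ord (?ev s n - ?ev t n)"
    using eventually_ord_twist_diff eventually_ord_twist_diff by (rule eventually_conj)
  then have "\<forall>\<^sub>F n in F. sat ord \<pi> (twist_assignment \<rho> n) (Dj j x y s t) \<longleftrightarrow>
      sat ord \<pi> (\<rho> n) (Dj j x y s t)"
    by eventually_elim (use Dj in \<open>simp add: eval_tm_twist_assignment\<close>)
  then show ?case by (rule eventually_subst)
next
  case (Rnm l m x y s)
  let ?ev = "\<lambda>u m. eval_tm (\<rho> m) u"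
  show ?case
    using Rnm eventually_subst[OF eventually_twist_mem_scaled_Qset_iff[of m "?ev y" "?ev x" "?ev s"]]
    by (simp add: eval_tm_twist_assignment)
next
  case (Neg \<phi>)
  then show ?case by (simp add: ultrafilter_eventually_not[OF ultra])
next
  case (Conj \<phi> \<psi>)
  then show ?case by (simp add: eventually_conj_iff)
next
  case (Ex i \<phi>)
  have IH: "(\<forall>\<^sub>F n in F. sat ord \<pi> (twist_assignment \<rho>' n) \<phi>) \<longleftrightarrow>
      (\<forall>\<^sub>F n in F. sat ord \<pi> (\<rho>' n) \<phi>)" for \<rho>'
    using Ex by simp
  have witness: "(\<forall>\<^sub>F n in F. \<exists>a. sat ord \<pi> ((\<sigma> n)(i := a)) \<phi>) \<longleftrightarrow>
      (\<exists>a. \<forall>\<^sub>F n in F. sat ord \<pi> ((\<sigma> n)(i := a n)) \<phi>)" for \<sigma>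
  proof
    assume "\<forall>\<^sub>F n in F. \<exists>a. sat ord \<pi> ((\<sigma> n)(i := a)) \<phi>"
    then have "\<forall>\<^sub>F n in F. sat ord \<pi> ((\<sigma> n)(i := SOME a. sat ord \<pi> ((\<sigma> n)(i := a)) \<phi>)) \<phi>"
      by (rule eventually_mono) (rule someI_ex)
    then show "\<exists>a. \<forall>\<^sub>F n in F. sat ord \<pi> ((\<sigma> n)(i := a n)) \<phi>"
      by (rule exI[where x = "\<lambda>n. SOME a. sat ord \<pi> ((\<sigma> n)(i := a)) \<phi>"])
  qed (auto elim: eventually_mono)
  have "(\<exists>a. \<forall>\<^sub>F n in F. sat ord \<pi> ((twist_assignment \<rho> n)(i := a n)) \<phi>) \<longleftrightarrow>
      (\<exists>a. \<forall>\<^sub>F n in F. sat ord \<pi> ((twist_assignment \<rho> n)(i := twist a n)) \<phi>)"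
    by (rule ex_twist_iff)
  also have "\<dots> \<longleftrightarrow> (\<exists>a. \<forall>\<^sub>F n in F. sat ord \<pi> ((\<rho> n)(i := a n)) \<phi>)"
  proof -
    have "(\<forall>\<^sub>F n in F. sat ord \<pi> ((twist_assignment \<rho> n)(i := twist a n)) \<phi>) \<longleftrightarrow>
        (\<forall>\<^sub>F n in F. sat ord \<pi> ((\<rho> n)(i := a n)) \<phi>)" for a
      using IH[of "\<lambda>n. (\<rho> n)(i := a n)"] by (simp add: twist_assignment_upd)
    then show ?thesis by simp
  qed
  finally show ?case using witness by simp
qed

end

section \<open>Definable sections\<close>

lemma (in uniformized_valuation) exists_sat_rescaled_coordinate:
  fixes \<rho> :: "nat \<Rightarrow> nat \<Rightarrow> 'a"
  assumes "subfield K" "wf_LK K \<phi>"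
    and sat: "\<And>n. sat ord \<pi> (\<rho> n) \<phi>"
    and const: "\<And>i n. i \<noteq> j \<Longrightarrow> ord (\<rho> n i) = ord (\<rho> 0 i)"
    and "\<And>n. \<rho> n j \<noteq> 0" "inj (\<lambda>n. ord (\<rho> n j))"
  shows "\<exists>n u. u \<noteq> 1 \<and> sat ord \<pi> ((\<rho> n)(j := u * \<rho> n j)) \<phi>"
proof -
  define k where "k = Suc (max_Qset_level \<phi>)"
  obtain F :: "nat filter" where "ultrafilter F" "F \<le> cofinite"
    using ultrafilter_le_exists[of cofinite] by auto
  then interpret twist_setting ord \<pi> K F "\<lambda>n. \<rho> n j" k
    using assms by unfold_locales (auto simp: k_def)
  have "twist_assignment \<rho> n = (\<rho> n)(j := (1 + \<pi> ^ k) * \<rho> n j)" for n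
    using twisted_z not_twisted_if_ord_const[OF const]
    by (auto simp: fun_eq_iff twist_assignment_def twist_def)
  moreover have "\<forall>\<^sub>F n in F. sat ord \<pi> (twist_assignment \<rho> n) \<phi>"
    using eventually_sat_twist_iff[OF assms(2)] sat by (simp add: k_def)
  ultimately obtain n where "sat ord \<pi> ((\<rho> n)(j := (1 + \<pi> ^ k) * \<rho> n j)) \<phi>"
    using eventually_happens'[OF F_nonbot] by auto
  moreover have "1 + \<pi> ^ k \<noteq> 1" using pi_power_nonzero by simp
  ultimately show ?thesis by blast
qed

lemma uniformizer_ord_finite:
  assumes "value_group_Z S ord" "uniformizer ord \<pi>" shows "ord \<pi> \<noteq> \<infinity>"
proof -
  obtain e :: real where "0 < e" "ord ` (S - {0}) = range (\<lambda>k::int. ereal (e * of_int k))"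
    using assms(1) unfolding value_group_Z_def by blast
  then obtain x where "ord x = ereal e" "0 < ord x"
    by (metis (no_types) imageE rangeI mult.right_neutral of_int_1 ereal_less(2))
  then have "ord \<pi> \<le> ereal e" using assms(2) unfolding uniformizer_def by metis
  then show ?thesis by auto
qed

lemma (in uniformized_valuation) not_sat_graph_of_ord_section:
  assumes "subfield K" "wf_LK K \<phi>"
    and graph: "\<And>x y c. sat ord \<pi> (\<lambda>i. if i < 5 then [x, y, x, y, c] ! i else e i) \<phi> \<longleftrightarrow> c = g x y"
    and ord_g: "\<And>x y. ord (g x y) = ord (y - x)"
  shows False
proof -
  define y where "y n = 1 + \<pi> ^ Suc n" for n
  define \<rho> where "\<rho> n i = (if i < 5 then [1, y n, 1, y n, g 1 (y n)] ! i else e i)" for n i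
  have sat_iff: "sat ord \<pi> ((\<rho> n)(4 := c)) \<phi> \<longleftrightarrow> c = g 1 (y n)" for n c
  proof -
    have "(\<rho> n)(4 := c) = (\<lambda>i. if i < 5 then [1, y n, 1, y n, c] ! i else e i)"
      by (auto simp: fun_eq_iff \<rho>_def nth_Cons split: nat.split)
    then show ?thesis using graph by simp
  qed
  have \<rho>_4: "\<rho> n 4 = g 1 (y n)" for n
    by (simp add: \<rho>_def)
  have ord_y: "ord (y n) = 0" for n
    using principal_unit_ord[of "Suc n" "y n"] by (simp add: y_def principal_unit_def)
  have ord_g_y: "ord (g 1 (y n)) = ereal (Suc n) * ord \<pi>" for n
    using ord_g unfolding y_def by (simp add: ord_power del: power_Suc)
  have g_y_nonzero: "g 1 (y n) \<noteq> 0" for n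
    using ord_g_y[of n] ord_pi_finite by (cases "ord \<pi>") auto
  have "\<exists>n u. u \<noteq> 1 \<and> sat ord \<pi> ((\<rho> n)(4 := u * \<rho> n 4)) \<phi>"
  proof (rule exists_sat_rescaled_coordinate[OF assms(1,2)])
    show "sat ord \<pi> (\<rho> n) \<phi>" for n
      using sat_iff[of n "g 1 (y n)"] fun_upd_triv[of "\<rho> n" 4] by (simp add: \<rho>_4)
    show "ord (\<rho> n i) = ord (\<rho> 0 i)" if "i \<noteq> 4" for i n
      using that ord_y by (auto simp: \<rho>_def nth_Cons split: nat.split)
    show "\<rho> n 4 \<noteq> 0" for n
      using g_y_nonzero by (simp add: \<rho>_4)
    show "inj (\<lambda>n. ord (\<rho> n 4))"
      using ord_pi_pos ord_pi_finite by (cases "ord \<pi>") (auto intro!: injI simp: \<rho>_4 ord_g_y)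
  qed
  then obtain n u where "u \<noteq> 1" "u * g 1 (y n) = g 1 (y n)"
    using sat_iff by (auto simp: \<rho>_4)
  then show False using g_y_nonzero[of n] by (simp add: mult_cancel_right2)
qed

theorem lemma4p2:
  fixes ord :: "'a::field_char_0 \<Rightarrow> ereal" and K :: "'a set" and \<pi> :: 'a and q q' :: nat
    and A :: "('a \<times> 'a \<times> 'a) set" and Proj :: "'a \<times> 'a \<times> 'a \<Rightarrow> 'a \<times> 'a"
  assumes "FqZ_field UNIV ord q"
    and "K \<subseteq> UNIV" and "subfield K"
    and "FqZ_field K ord q'"
    and "uniformizer ord \<pi>"
    and "A = {(x, y, z). ord z = ord (y - x)}"
    and "Proj = (\<lambda>(x, y, z). (x, y))"
  shows "\<not> (\<exists>f :: 'a \<times> 'a \<Rightarrow> 'a \<times> 'a \<times> 'a.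
            (\<forall>p \<in> Proj ` A. f p \<in> A \<and> Proj (f p) = p) \<and>
            LK_definable K ord \<pi> 5
              {[x, y, a, b, c] | x y a b c. (x, y) \<in> Proj ` A \<and> f (x, y) = (a, b, c)})"
proof (rule notI, elim exE conjE)
  fix f :: "'a \<times> 'a \<Rightarrow> 'a \<times> 'a \<times> 'a"
  assume f_section: "\<forall>p \<in> Proj ` A. f p \<in> A \<and> Proj (f p) = p"
    and "LK_definable K ord \<pi> 5
           {[x, y, a, b, c] | x y a b c. (x, y) \<in> Proj ` A \<and> f (x, y) = (a, b, c)}"
  then obtain \<phi> e where "wf_LK K \<phi>" and graph: "\<forall>xs. length xs = 5 \<longrightarrow>
      xs \<in> {[x, y, a, b, c] | x y a b c. (x, y) \<in> Proj ` A \<and> f (x, y) = (a, b, c)} \<longleftrightarrow>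
      sat ord \<pi> (\<lambda>i. if i < 5 then xs ! i else e i) \<phi>"
    unfolding LK_definable_def by (elim exE conjE)
  interpret uniformized_valuation ord \<pi>
    using assms(1,5) uniformizer_ord_finite[of UNIV ord \<pi>]
    by unfold_locales (auto simp: FqZ_field_def uniformizer_def)
  have "Proj ` A = UNIV"
    using assms(6,7) by (auto intro!: image_eqI[where x = "(_, _, _ - _)"])
  then have f: "f (x, y) = (x, y, snd (snd (f (x, y))))" "ord (snd (snd (f (x, y)))) = ord (y - x)"
    for x y using f_section assms(6,7) by (auto simp: case_prod_beta prod_eq_iff)
  have "sat ord \<pi> (\<lambda>i. if i < 5 then [x, y, x, y, c] ! i else e i) \<phi> \<longleftrightarrow> c = snd (snd (f (x, y)))"
    for x y c using graph[rule_format, of "[x, y, x, y, c]"] \<open>Proj ` A = UNIV\<close> f(1)[of x y]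
    by auto
  then show False
    by (rule not_sat_graph_of_ord_section[OF assms(3) \<open>wf_LK K \<phi>\<close>]) (rule f(2))
qed

end
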